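(* For any $(u,z,\mathcal R,\dot{\mathcal R})$ (with $u\in L^2(B_1)$ radial and $z,\mathcal R,\dot{\mathcal R}\in\mathbb R$) satisfying the linearized constant-mass condition $\int_{B_1}u\,dx=-\frac{4\pi}3z-4\pi\frac{\rho_*}{R_*}\mathcal R$, the linearized total energy \[ \mathcal E^L_{\rm total}=-4\pi\sigma\mathcal R^2-4\pi R_gT_\infty R_*^2\mathcal Rz-\frac{2\pi R_gT_\infty R_*^3}{3\rho_*}z^2+\frac{c_v\gamma T_\infty R_*^3}{2\rho_*}\int_{B_1}u^2dx+2\pi\rho_lR_*^3\dot{\mathcal R}^2 \] satisfies \[ \mathcal E^L_{\rm total}\ge2\pi(4\sigma+3p_{\infty,*}R_* )\mathcal R^2+\frac{c_vT_\infty R_*^3}{2\rho_*}\int_{B_1}u^2dx+2\pi\rho_lR_*^3\dot{\mathcal R}^2. \]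
   Context: Parameters: $\gamma>1$, $c_v>0$, $R_g>0$ with $\gamma c_v=c_v+R_g$; $T_\infty>0$, $p_{\infty,*}>0$, $\sigma>0$, $\rho_l>0$; $\rho_*,R_*>0$ satisfy $R_gT_\infty\rho_*=p_{\infty,*}+2\sigma/R_*$. $B_1$ is the unit ball of $\mathbb R^3$. *)

theory Defs
  imports "HOL-Analysis.Analysis"
begin

end

theory Submission
  imports Defs
begin

(* Write w = z + 3 \<rho>_s RR / R_s, so that the mass constraint reads \<integral>_B u = -(4 pi / 3) w.
   After eliminating p_inf through the equilibrium relation and c_v \<gamma> through
   c_v \<gamma> = c_v + R_g, the total energy minus the claimed lower bound is exactly
   R_g T_inf R_s^3 / (2 \<rho>_s) * (\<integral>_B u^2 - (4 pi / 3) w^2), and the bracket is nonnegative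
   by the Cauchy-Schwarz inequality (\<integral>_B u)^2 \<le> |B| \<integral>_B u^2 with |B| = 4 pi / 3. *)

lemma real_quadratic_nonneg_imp_discriminant_le:
  fixes a b c :: real
  assumes nonneg: "\<And>x. 0 \<le> a * x^2 - 2 * b * x + c" and "0 \<le> a"
  shows "b^2 \<le> a * c"
proof (cases "a = 0")
  case True
  have "b = 0"
  proof (rule ccontr)
    assume "b \<noteq> 0"
    then show False
      using nonneg[of "(c + 1) / (2 * b)"] True by (simp add: field_simps)
  qed
  then show ?thesis using True by simp
next
  case False
  then have "0 < a" using \<open>0 \<le> a\<close> by simp
  have "0 \<le> a * (b / a)^2 - 2 * b * (b / a) + c" by (rule nonneg)
  also have "\<dots> = (a * c - b^2) / a"
    using \<open>0 < a\<close> by (simp add: field_simps power2_eq_square)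
  finally show ?thesis using \<open>0 < a\<close> by (simp add: zero_le_divide_iff)
qed

lemma set_integrable_square_imp_set_integrable:
  fixes u :: "'a \<Rightarrow> real"
  assumes "A \<in> sets M" "emeasure M A < \<infinity>"
    and "set_borel_measurable M A u" "set_integrable M A (\<lambda>x. (u x)^2)"
  shows "set_integrable M A u"
proof (rule set_integrable_bound)
  have "set_integrable M A (\<lambda>x. 1)"
    using assms(1,2) by (simp add: set_integrable_def less_top)
  then show "set_integrable M A (\<lambda>x. 1 + (u x)^2)"
    using assms(4) by (rule set_integral_add)
  show "set_borel_measurable M A u" by fact
  have "\<bar>y\<bar> \<le> \<bar>1 + y^2\<bar>" for y :: real
    using sum_squares_bound[of "\<bar>y\<bar>" 1] by (simp add: power2_eq_square)
  then show "AE x in M. x \<in> A \<longrightarrow> norm (u x) \<le> norm (1 + (u x)^2)"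
    by simp
qed

lemma Cauchy_Schwarz_set_integral:
  fixes u :: "'a \<Rightarrow> real"
  assumes A: "A \<in> sets M" "emeasure M A < \<infinity>"
    and u: "set_borel_measurable M A u" "set_integrable M A (\<lambda>x. (u x)^2)"
  shows "(\<integral>x\<in>A. u x \<partial>M)^2 \<le> measure M A * (\<integral>x\<in>A. (u x)^2 \<partial>M)"
proof (rule real_quadratic_nonneg_imp_discriminant_le)
  fix c :: real
  have int_u: "set_integrable M A u"
    using set_integrable_square_imp_set_integrable[OF A u] .
  have int_const: "set_integrable M A (\<lambda>x. c^2)"
    using A by (simp add: set_integrable_def less_top)
  have int_lin: "set_integrable M A (\<lambda>x. 2 * c * u x)"
    using int_u by (rule set_integrable_mult_right)
  have "0 \<le> (\<integral>x\<in>A. (u x - c)^2 \<partial>M)"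
    unfolding set_lebesgue_integral_def by (simp add: integral_nonneg_AE)
  also have "\<dots> = (\<integral>x\<in>A. (u x)^2 - 2 * c * u x + c^2 \<partial>M)"
    by (simp add: power2_diff algebra_simps)
  also have "\<dots> = (\<integral>x\<in>A. (u x)^2 \<partial>M) - 2 * c * (\<integral>x\<in>A. u x \<partial>M) + measure M A * c^2"
    using int_u int_const int_lin u(2) A
    by (simp add: set_integral_add set_integral_diff set_integral_const less_top)
  finally show "0 \<le> measure M A * c^2 - 2 * (\<integral>x\<in>A. u x \<partial>M) * c + (\<integral>x\<in>A. (u x)^2 \<partial>M)"
    by (simp add: algebra_simps)
qed simp

theorem proposition3p5:
  fixes \<gamma> c_v R_g T_inf p_inf \<sigma> \<rho>_l \<rho>_s R_s z RR RRdot :: real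
    and u :: "real^3 \<Rightarrow> real"
  assumes "\<gamma> > 1" "c_v > 0" "R_g > 0" "\<gamma> * c_v = c_v + R_g"
    and "T_inf > 0" "p_inf > 0" "\<sigma> > 0" "\<rho>_l > 0" "\<rho>_s > 0" "R_s > 0"
    and "R_g * T_inf * \<rho>_s = p_inf + 2 * \<sigma> / R_s"
    and u_meas: "set_borel_measurable lborel (ball 0 1) u"
    and u_L2: "set_integrable lborel (ball 0 1) (\<lambda>x. (u x)^2)"
    and u_radial: "\<forall>x\<in>ball 0 1. \<forall>y\<in>ball 0 1. norm x = norm y \<longrightarrow> u x = u y"
    and mass: "(\<integral>x\<in>ball 0 1. u x \<partial>lborel) = - (4 * pi / 3) * z - 4 * pi * (\<rho>_s / R_s) * RR"
  shows "- 4 * pi * \<sigma> * RR^2 - 4 * pi * R_g * T_inf * R_s^2 * RR * z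
           - (2 * pi * R_g * T_inf * R_s^3) / (3 * \<rho>_s) * z^2
           + (c_v * \<gamma> * T_inf * R_s^3) / (2 * \<rho>_s) * (\<integral>x\<in>ball 0 1. (u x)^2 \<partial>lborel)
           + 2 * pi * \<rho>_l * R_s^3 * RRdot^2
         \<ge> 2 * pi * (4 * \<sigma> + 3 * p_inf * R_s) * RR^2
           + (c_v * T_inf * R_s^3) / (2 * \<rho>_s) * (\<integral>x\<in>ball 0 1. (u x)^2 \<partial>lborel)
           + 2 * pi * \<rho>_l * R_s^3 * RRdot^2"
proof -
  define I where "I = (\<integral>x\<in>ball 0 1. (u x)^2 \<partial>lborel)"
  define w where "w = z + 3 * \<rho>_s * RR / R_s"
  have vol: "measure lborel (ball (0::real^3) 1) = 4 * pi / 3"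
    using sphere_volume[of 1 "0::real^3"] by simp
  have mass_w: "(\<integral>x\<in>ball 0 1. u x \<partial>lborel) = - (4 * pi / 3) * w"
    using mass \<open>R_s > 0\<close> by (simp add: w_def field_simps)
  have "(4 * pi / 3 * w)^2 \<le> 4 * pi / 3 * I"
    using Cauchy_Schwarz_set_integral[OF _ emeasure_bounded_finite[OF bounded_ball] u_meas u_L2]
    by (simp add: vol mass_w I_def)
  then have bracket_nonneg: "0 \<le> I - 4 * pi / 3 * w^2"
    by (simp add: power_mult_distrib power2_eq_square)
  have deficit: "(- 4 * pi * \<sigma> * RR^2 - 4 * pi * R_g * T_inf * R_s^2 * RR * z
           - (2 * pi * R_g * T_inf * R_s^3) / (3 * \<rho>_s) * z^2
           + (c_v * \<gamma> * T_inf * R_s^3) / (2 * \<rho>_s) * I)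
         - (2 * pi * (4 * \<sigma> + 3 * p_inf * R_s) * RR^2 + (c_v * T_inf * R_s^3) / (2 * \<rho>_s) * I)
       = R_g * T_inf * R_s^3 / (2 * \<rho>_s) * (I - 4 * pi / 3 * w^2)"
  proof -
    have p_inf_eq: "p_inf = R_g * T_inf * \<rho>_s - 2 * \<sigma> / R_s"
      using assms(11) by simp
    have "c_v * \<gamma> = c_v + R_g"
      using assms(4) by (simp add: mult.commute)
    then show ?thesis
      unfolding p_inf_eq using \<open>\<rho>_s > 0\<close> \<open>R_s > 0\<close>
      by (simp add: w_def field_simps power2_eq_square power3_eq_cube)
  qed
  have "0 \<le> R_g * T_inf * R_s^3 / (2 * \<rho>_s) * (I - 4 * pi / 3 * w^2)"
    using assms bracket_nonneg by simp
  then show ?thesis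
    using deficit unfolding I_def by linarith
qed

end
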